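(* Let $(D,v^* )$ be a neighbor-acyclic instance such that $D$ has no source. Then $v^*$ is a 3-king of $D$, i.e., every vertex of $D$ is reachable from $v^*$ by a directed path of length at most $3$.
   Context: A tournament is a digraph with exactly one arc between every pair of distinct vertices. An instance $(D,v^* )$ (tournament $D$, vertex $v^*$) is neighbor-acyclic if $D[N_{\mathrm{in}}(v^* )]$ and $D[N_{\mathrm{out}}(v^* )]$ are both acyclic. A source is a vertex of in-degree $0$. *)

theory Defs
  imports Main
begin

definition tournament :: "'a set \<Rightarrow> ('a \<Rightarrow> 'a \<Rightarrow> bool) \<Rightarrow> bool" where
  "tournament V A \<longleftrightarrow> finite V
     \<and> (\<forall>u v. A u v \<longrightarrow> u \<in> V \<and> v \<in> V)
     \<and> (\<forall>v. \<not> A v v)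
     \<and> (\<forall>u\<in>V. \<forall>v\<in>V. u \<noteq> v \<longrightarrow> (A u v \<longleftrightarrow> \<not> A v u))"

definition in_nbrs :: "'a set \<Rightarrow> ('a \<Rightarrow> 'a \<Rightarrow> bool) \<Rightarrow> 'a \<Rightarrow> 'a set" where
  "in_nbrs V A v = {u \<in> V. A u v}"

definition out_nbrs :: "'a set \<Rightarrow> ('a \<Rightarrow> 'a \<Rightarrow> bool) \<Rightarrow> 'a \<Rightarrow> 'a set" where
  "out_nbrs V A v = {u \<in> V. A v u}"

definition induced_arcs :: "('a \<Rightarrow> 'a \<Rightarrow> bool) \<Rightarrow> 'a set \<Rightarrow> ('a \<times> 'a) set" where
  "induced_arcs A S = {(u, v). u \<in> S \<and> v \<in> S \<and> A u v}"

definition acyclic_on :: "('a \<Rightarrow> 'a \<Rightarrow> bool) \<Rightarrow> 'a set \<Rightarrow> bool" where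
  "acyclic_on A S \<longleftrightarrow> acyclic (induced_arcs A S)"

definition neighbor_acyclic :: "'a set \<Rightarrow> ('a \<Rightarrow> 'a \<Rightarrow> bool) \<Rightarrow> 'a \<Rightarrow> bool" where
  "neighbor_acyclic V A v \<longleftrightarrow>
     acyclic_on A (in_nbrs V A v) \<and> acyclic_on A (out_nbrs V A v)"

definition is_source :: "'a set \<Rightarrow> ('a \<Rightarrow> 'a \<Rightarrow> bool) \<Rightarrow> 'a \<Rightarrow> bool" where
  "is_source V A v \<longleftrightarrow> v \<in> V \<and> in_nbrs V A v = {}"

text \<open>Directed path v_0 ... v_k given as a list of vertices (distinct), consecutive arcs;
  its length is the number of arcs, i.e. length of the list minus 1.\<close>
definition dpath :: "('a \<Rightarrow> 'a \<Rightarrow> bool) \<Rightarrow> 'a list \<Rightarrow> bool" where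
  "dpath A ps \<longleftrightarrow> ps \<noteq> [] \<and> distinct ps \<and> (\<forall>i. Suc i < length ps \<longrightarrow> A (ps ! i) (ps ! Suc i))"

definition k_king :: "'a set \<Rightarrow> ('a \<Rightarrow> 'a \<Rightarrow> bool) \<Rightarrow> nat \<Rightarrow> 'a \<Rightarrow> bool" where
  "k_king V A k v \<longleftrightarrow> v \<in> V \<and> (\<forall>w\<in>V. \<exists>ps. dpath A ps \<and> hd ps = v \<and> last ps = w
       \<and> length ps \<le> Suc k)"

end

theory Submission
  imports Defs
begin

text \<open>Every vertex
  other than \<open>v\<^sup>*\<close> and its out-neighbours lies in \<open>I\<close>. A source \<open>s\<close> of \<open>D[I]\<close> dominates all
  other vertices of \<open>I\<close>, and since \<open>s\<close> is no source of \<open>D\<close>, some vertex \<open>u\<close> beats it; \<open>u\<close> lies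
  outside \<open>I \<union> {v\<^sup>*}\<close>, so it is an out-neighbour of \<open>v\<^sup>*\<close>. Thus \<open>v\<^sup>* u s w\<close> (or \<open>v\<^sup>* u w\<close>
  when \<open>w = s\<close>) reaches any \<open>w \<in> I\<close>.\<close>

lemma dpath_singleton [simp]: "dpath A [x]"
  by (simp add: dpath_def)

lemma dpath_Cons_Cons [simp]:
  "dpath A (x # y # ys) \<longleftrightarrow> A x y \<and> x \<notin> set (y # ys) \<and> dpath A (y # ys)"
  by (auto simp: dpath_def nth_Cons split: nat.splits)

lemma tournament_finite: "tournament V A \<Longrightarrow> finite V"
  unfolding tournament_def by blast

lemma tournament_irrefl: "tournament V A \<Longrightarrow> \<not> A v v"
  unfolding tournament_def by blast

lemma tournament_arc_asym:
  assumes "tournament V A" and "A u v"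
  shows "\<not> A v u"
  using assms unfolding tournament_def by (metis (no_types))

lemma tournament_arc_or_reverse:
  assumes "tournament V A" and "u \<in> V" and "v \<in> V" and "u \<noteq> v"
  shows "A u v \<or> A v u"
  using assms unfolding tournament_def by blast

lemma acyclic_on_obtains_source:
  assumes "finite S" and "acyclic_on A S" and "x \<in> S"
  obtains s where "s \<in> S" and "\<forall>y\<in>S. \<not> A y s"
proof -
  have "induced_arcs A S \<subseteq> S \<times> S"
    by (auto simp: induced_arcs_def)
  then have "finite (induced_arcs A S)"
    using assms(1) by (simp add: finite_subset)
  then have "wf (induced_arcs A S)"
    using assms(2) finite_acyclic_wf unfolding acyclic_on_def by blast
  then obtain s where "s \<in> S" and minimal: "\<And>y. (y, s) \<in> induced_arcs A S \<Longrightarrow> y \<notin> S"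
    using assms(3) by (rule wfE_min) blast
  have "\<forall>y\<in>S. \<not> A y s"
    using minimal \<open>s \<in> S\<close> by (auto simp: induced_arcs_def)
  with \<open>s \<in> S\<close> show thesis
    by (rule that)
qed

lemma out_nbr_dominates_source_of_in_nbrs:
  assumes "tournament V A" and "v \<in> V"
    and "s \<in> in_nbrs V A v" and "\<forall>y\<in>in_nbrs V A v. \<not> A y s"
    and "\<not> is_source V A s"
  obtains u where "A v u" and "A u s"
proof -
  have "in_nbrs V A s \<noteq> {}"
    using assms(3,5) by (simp add: is_source_def in_nbrs_def)
  then obtain u where "u \<in> V" and "A u s"
    by (auto simp: in_nbrs_def)
  have "u \<noteq> v"
    using \<open>A u s\<close> assms(3) tournament_arc_asym[OF assms(1)] by (auto simp: in_nbrs_def)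
  moreover have "\<not> A u v"
    using \<open>u \<in> V\<close> \<open>A u s\<close> assms(4) by (auto simp: in_nbrs_def)
  ultimately have "A v u"
    using tournament_arc_or_reverse[OF assms(1,2) \<open>u \<in> V\<close>] by blast
  then show thesis
    using \<open>A u s\<close> by (rule that)
qed

lemma in_nbr_reachable_within_3:
  assumes tour: "tournament V A" and "v \<in> V"
    and acyclic_in: "acyclic_on A (in_nbrs V A v)"
    and no_source: "\<forall>x\<in>V. \<not> is_source V A x"
    and w_in: "w \<in> in_nbrs V A v"
  shows "\<exists>ps. dpath A ps \<and> hd ps = v \<and> last ps = w \<and> length ps \<le> Suc 3"
proof -
  let ?I = "in_nbrs V A v"
  have "finite ?I"
    using tournament_finite[OF tour] by (simp add: in_nbrs_def)
  then obtain s where "s \<in> ?I" and s_source: "\<forall>y\<in>?I. \<not> A y s"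
    using acyclic_in w_in by (rule acyclic_on_obtains_source)
  moreover have "\<not> is_source V A s"
    using no_source \<open>s \<in> ?I\<close> by (simp add: in_nbrs_def)
  ultimately obtain u where "A v u" and "A u s"
    by (rule out_nbr_dominates_source_of_in_nbrs[OF tour \<open>v \<in> V\<close>])
  have "A w v" and "A s v" and "w \<in> V" and "s \<in> V"
    using w_in \<open>s \<in> ?I\<close> by (auto simp: in_nbrs_def)
  then have distinct: "v \<noteq> u" "u \<noteq> w" "u \<noteq> s" "v \<noteq> w" "v \<noteq> s"
    using \<open>A v u\<close> tournament_irrefl[OF tour] tournament_arc_asym[OF tour] by blast+
  show ?thesis
  proof (cases "s = w")
    case True
    then show ?thesis
      using \<open>A v u\<close> \<open>A u s\<close> distinct by (intro exI[of _ "[v, u, w]"]) auto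
  next
    case False
    then have "A s w"
      using tournament_arc_or_reverse[OF tour \<open>s \<in> V\<close> \<open>w \<in> V\<close>] s_source w_in by blast
    then show ?thesis
      using \<open>A v u\<close> \<open>A u s\<close> distinct False by (intro exI[of _ "[v, u, s, w]"]) auto
  qed
qed

lemma three_king_if_acyclic_in_nbrs:
  assumes tour: "tournament V A" and "v \<in> V"
    and "acyclic_on A (in_nbrs V A v)"
    and "\<forall>x\<in>V. \<not> is_source V A x"
  shows "k_king V A 3 v"
  unfolding k_king_def
proof (intro conjI ballI)
  show "v \<in> V" by fact
  fix w assume "w \<in> V"
  consider "w = v" | "A v w" | "w \<in> in_nbrs V A v"
    using tournament_arc_or_reverse[OF tour \<open>v \<in> V\<close> \<open>w \<in> V\<close>] \<open>w \<in> V\<close>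
    by (auto simp: in_nbrs_def)
  then show "\<exists>ps. dpath A ps \<and> hd ps = v \<and> last ps = w \<and> length ps \<le> Suc 3"
  proof cases
    case 1
    then show ?thesis by (intro exI[of _ "[v]"]) simp
  next
    case 2
    then show ?thesis
      using tournament_irrefl[OF tour] by (intro exI[of _ "[v, w]"]) auto
  next
    case 3
    then show ?thesis
      by (rule in_nbr_reachable_within_3[OF assms])
  qed
qed

theorem lemma3:
  fixes V :: "'a set" and A :: "'a \<Rightarrow> 'a \<Rightarrow> bool" and vstar :: 'a
  assumes "tournament V A"
    and "vstar \<in> V"
    and "neighbor_acyclic V A vstar"
    and "\<forall>v\<in>V. \<not> is_source V A v"
  shows "k_king V A 3 vstar"
proof -
  have "acyclic_on A (in_nbrs V A vstar)"
    using assms(3) by (simp add: neighbor_acyclic_def)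
  then show ?thesis
    by (rule three_king_if_acyclic_in_nbrs[OF assms(1,2) _ assms(4)])
qed

end
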